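(* For vectors $v,v'\in\mathbb{R}^2$ with $v\neq\pm v'$ and $\tau>0$, let $E(v,v',\tau)$ be the set of $\gamma\in SL(2,\mathbb{R})$ such that $$\|\gamma\|\leqslant2,\quad e^{-\tau}\leqslant\|\gamma v\|\leqslant e^{\tau},\quad e^{-\tau}\leqslant\|\gamma v'\|\leqslant e^{\tau}.$$ Then the Haar measure of $E(v,v',\tau)$ is $O(\tau^{3/2})$ as $\tau\to0$, with implied constants uniform when $\|v-v'\|$ and $\|v+v'\|$ are bounded away from $0$: for every $c>0$ there exist $C,\tau_0>0$ such that the Haar measure of $E(v,v',\tau)$ is $\leqslant C\tau^{3/2}$ for all $0<\tau<\tau_0$ and all $v,v'$ with $\|v-v'\|\geqslant c$, $\|v+v'\|\geqslant c$.
   Context: $\|\cdot\|$ is the Euclidean norm on $\mathbb{R}^2$ and, for matrices, the associated operator norm. A fixed Haar measure on $SL(2,\mathbb{R})$ is used. *)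

theory Defs
  imports "HOL-Analysis.Analysis"
begin

text \<open>Matrices in SL(2,R) with nonzero upper-left entry, parametrised by (a,b,c):
  rows (a, b) and (c, (1+b c)/a).\<close>
definition sl2_of :: "real \<Rightarrow> real \<Rightarrow> real \<Rightarrow> real^2^2" where
  "sl2_of a b c = vector [vector [a, b], vector [c, (1 + b * c) / a]]"

text \<open>A (fixed) Haar measure on SL(2,R): in the coordinates (a,b,c) above it is
  da db dc / |a|; the complement {a = 0} is a null set.\<close>
definition haar_SL2 :: "(real^2^2) set \<Rightarrow> ennreal" where
  "haar_SL2 E = (\<integral>\<^sup>+ p. (case p of (a, b, c) \<Rightarrow>
      (if a \<noteq> 0 \<and> sl2_of a b c \<in> E then ennreal (1 / \<bar>a\<bar>) else 0))
      \<partial>(lborel :: (real \<times> real \<times> real) measure))"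

definition E_set :: "real^2 \<Rightarrow> real^2 \<Rightarrow> real \<Rightarrow> (real^2^2) set" where
  "E_set v v' \<tau> = {\<gamma>. det \<gamma> = 1 \<and> onorm (\<lambda>x. \<gamma> *v x) \<le> 2
     \<and> exp (-\<tau>) \<le> norm (\<gamma> *v v) \<and> norm (\<gamma> *v v) \<le> exp \<tau>
     \<and> exp (-\<tau>) \<le> norm (\<gamma> *v v') \<and> norm (\<gamma> *v v') \<le> exp \<tau>}"

end

(* If E(v,v',tau) is non-empty, pick gamma in it. Since det gamma = 1 and |gamma| <= 2, gamma
   distorts lengths by a bounded factor, and the identity
     |X - Y|^2 |X + Y|^2 = (|X|^2 - |Y|^2)^2 + 4 det(X,Y)^2,
   applied to X = gamma v, Y = gamma v', shows |det(v,v')| >= c^2/32 once tau is small.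
   For the measure, parametrise SL(2,R) by (a,b,c) with Haar density 1/|a| and, for fixed a,
   substitute (x1,x2) = gamma v for (b,c). Then gamma v lies in an annulus of area O(tau). For fixed
   gamma v, the inner product <gamma v, gamma v'> is affine in a with slope comparable to det(v,v'),
   and Lagrange's identity |gamma v|^2 |gamma v'|^2 = <gamma v, gamma v'>^2 + det(v,v')^2 confines
   it to a set of measure O(sqrt tau). *)

theory Submission
  imports Defs
begin

lemma norm_vec2_squared: "norm (x::real^2) ^ 2 = x$1 ^ 2 + x$2 ^ 2"
  by (simp add: norm_vec_def L2_set_def sum_2)

lemma matrix_vector_mult_vec2_nth:
  "((g::real^2^2) *v x) $ 1 = g$1$1 * x$1 + g$1$2 * x$2"
  "(g *v x) $ 2 = g$2$1 * x$1 + g$2$2 * x$2"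
  by (simp_all add: matrix_vector_mult_def sum_2)

lemma two_squares_mult:
  fixes a b x y :: real
  shows "(a^2 + b^2) * (x^2 + y^2) = (a*x + b*y)^2 + (a*y - b*x)^2"
  by (simp add: power2_eq_square algebra_simps)

lemma sq_linear_combination_le:
  fixes a b x y :: real
  shows "(a*x + b*y)^2 \<le> (a^2 + b^2) * (x^2 + y^2)"
  unfolding two_squares_mult by simp

lemma norm_sq_le_of_det_eq_1:
  fixes g :: "real^2^2"
  assumes det: "det g = 1" and bound: "onorm ((*v) g) \<le> M"
  shows "norm w ^ 2 \<le> 2 * M^2 * norm (g *v w) ^ 2"
proof -
  have column: "g$1$j ^ 2 + g$2$j ^ 2 \<le> M^2" for j
  proof -
    have "norm (g *v axis j 1) \<le> M"
      using onorm[OF matrix_vector_mul_bounded_linear[of g], of "axis j 1"] bound by simp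
    then have "norm (g *v axis j 1) ^ 2 \<le> M^2" by (simp add: power_mono)
    then show ?thesis
      using exhaust_2[of j] by (auto simp: norm_vec2_squared matrix_vector_mult_vec2_nth axis_def)
  qed
  define z where "z = g *v w"
  \<comment> \<open>Since det g = 1, the adjugate of g is its inverse.\<close>
  have det': "g$1$1 * g$2$2 - g$1$2 * g$2$1 = 1" using det by (simp add: det_2)
  have "g$2$2 * z$1 - g$1$2 * z$2 = (g$1$1 * g$2$2 - g$1$2 * g$2$1) * w$1"
       "g$1$1 * z$2 - g$2$1 * z$1 = (g$1$1 * g$2$2 - g$1$2 * g$2$1) * w$2"
    by (simp_all add: z_def matrix_vector_mult_vec2_nth algebra_simps)
  then have w: "w$1 = g$2$2 * z$1 - g$1$2 * z$2" "w$2 = g$1$1 * z$2 - g$2$1 * z$1"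
    by (simp_all add: det')
  have "w$1 ^ 2 \<le> M^2 * norm z ^ 2"
  proof -
    have "w$1 ^ 2 \<le> (g$2$2 ^ 2 + (- g$1$2) ^ 2) * (z$1 ^ 2 + z$2 ^ 2)"
      using sq_linear_combination_le[of "g$2$2" "z$1" "- g$1$2" "z$2"] by (simp add: w)
    also have "\<dots> \<le> M^2 * norm z ^ 2"
      using column[of 2] by (simp add: norm_vec2_squared mult_right_mono add.commute)
    finally show ?thesis .
  qed
  moreover have "w$2 ^ 2 \<le> M^2 * norm z ^ 2"
  proof -
    have "w$2 ^ 2 \<le> (g$1$1 ^ 2 + (- g$2$1) ^ 2) * (z$2 ^ 2 + z$1 ^ 2)"
      using sq_linear_combination_le[of "g$1$1" "z$2" "- g$2$1" "z$1"] by (simp add: w)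
    also have "\<dots> \<le> M^2 * norm z ^ 2"
      using column[of 1] by (simp add: norm_vec2_squared mult_right_mono add.commute)
    finally show ?thesis .
  qed
  ultimately show ?thesis by (simp add: norm_vec2_squared[of w] z_def)
qed

definition cross2 :: "real^2 \<Rightarrow> real^2 \<Rightarrow> real" where
  "cross2 x y = x$1 * y$2 - x$2 * y$1"

lemma cross2_matrix_vector_mult: "cross2 (g *v x) (g *v y) = det g * cross2 x y"
  by (simp add: cross2_def det_2 matrix_vector_mult_vec2_nth algebra_simps)

lemma norm_diff_sq_mult_norm_add_sq:
  fixes x y :: "real^2"
  shows "norm (x - y) ^ 2 * norm (x + y) ^ 2 = (norm x ^ 2 - norm y ^ 2) ^ 2 + 4 * cross2 x y ^ 2"
  unfolding norm_vec2_squared cross2_def by (simp add: power2_eq_square algebra_simps)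

lemma exp_sq_diff_le:
  fixes t :: real
  assumes "0 \<le> t" "t \<le> 1/2"
  shows "exp t ^ 2 - exp (-t) ^ 2 \<le> 8 * t"
proof -
  have sq: "exp t ^ 2 = exp (2*t)" "exp (-t) ^ 2 = exp (-2*t)"
    by (simp_all add: power2_eq_square exp_add[symmetric])
  have lower: "1 - 2*t \<le> exp (-2*t)" using exp_ge_add_one_self[of "-2*t"] by simp
  have "exp (2*t) \<le> exp 1" using assms by simp
  also have "\<dots> \<le> 3" using exp_le by simp
  finally have upper: "exp (2*t) \<le> 3" .
  have "exp (2*t) * (1 - 2*t) \<le> exp (2*t) * exp (-2*t)"
    using lower by (intro mult_left_mono) simp_all
  then have "exp (2*t) - 1 \<le> 2*t * exp (2*t)" by (simp add: exp_add[symmetric] algebra_simps)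
  also have "\<dots> \<le> 2*t * 3" using upper assms by (intro mult_left_mono) auto
  finally show ?thesis unfolding sq using lower by linarith
qed

lemma cross2_lower_bound:
  assumes \<gamma>: "\<gamma> \<in> E_set v u \<tau>" and \<tau>: "0 \<le> \<tau>" "\<tau> \<le> 1/2" "\<tau> \<le> c^2/128"
    and c: "0 < c" "c \<le> norm (v - u)" "c \<le> norm (v + u)"
  shows "c^2/32 \<le> \<bar>cross2 v u\<bar>"
proof -
  define X Y where "X = \<gamma> *v v" and "Y = \<gamma> *v u"
  have det: "det \<gamma> = 1" and bound: "onorm ((*v) \<gamma>) \<le> 2"
    using \<gamma> by (simp_all add: E_set_def)
  have X: "exp (-\<tau>) ^ 2 \<le> norm X ^ 2" "norm X ^ 2 \<le> exp \<tau> ^ 2"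
    and Y: "exp (-\<tau>) ^ 2 \<le> norm Y ^ 2" "norm Y ^ 2 \<le> exp \<tau> ^ 2"
    using \<gamma> by (auto simp: E_set_def X_def Y_def intro!: power_mono)
  have "c^2 \<le> norm (v - u) ^ 2" using c by (simp add: power_mono)
  also have "\<dots> \<le> 8 * norm (X - Y) ^ 2"
    using norm_sq_le_of_det_eq_1[OF det bound, of "v - u"]
    by (simp add: X_def Y_def matrix_vector_mult_diff_distrib)
  finally have diff: "c^2/8 \<le> norm (X - Y) ^ 2" by simp
  have "c^2 \<le> norm (v + u) ^ 2" using c by (simp add: power_mono)
  also have "\<dots> \<le> 8 * norm (X + Y) ^ 2"
    using norm_sq_le_of_det_eq_1[OF det bound, of "v + u"]
    by (simp add: X_def Y_def matrix_vector_right_distrib)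
  finally have sum: "c^2/8 \<le> norm (X + Y) ^ 2" by simp
  have "\<bar>norm X ^ 2 - norm Y ^ 2\<bar> \<le> c^2/16"
    using X Y exp_sq_diff_le[OF \<tau>(1,2)] \<tau>(3) by linarith
  then have gap: "(norm X ^ 2 - norm Y ^ 2) ^ 2 \<le> (c^2/16) ^ 2"
    by (simp add: abs_le_square_iff[symmetric])
  have "(c^2/8) ^ 2 \<le> norm (X - Y) ^ 2 * norm (X + Y) ^ 2"
    unfolding power2_eq_square[of "c^2/8"] using diff sum by (intro mult_mono) auto
  also have "\<dots> = (norm X ^ 2 - norm Y ^ 2) ^ 2 + 4 * cross2 v u ^ 2"
    by (simp add: norm_diff_sq_mult_norm_add_sq X_def Y_def cross2_matrix_vector_mult det)
  finally have "(c^2/8) ^ 2 - (c^2/16) ^ 2 \<le> 4 * cross2 v u ^ 2" using gap by linarith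
  moreover have "(c^2/8) ^ 2 - (c^2/16) ^ 2 = 12 * (c^2/32) ^ 2"
    by (simp add: power2_eq_square field_simps)
  ultimately have "(c^2/32) ^ 2 \<le> cross2 v u ^ 2"
    using zero_le_power2[of "c^2/32"] by linarith
  then have "\<bar>c^2/32\<bar> \<le> \<bar>cross2 v u\<bar>" by (simp only: abs_le_square_iff)
  then show ?thesis by simp
qed

definition annulus :: "real \<Rightarrow> real \<Rightarrow> (real \<times> real) set" where
  "annulus L U = {z. L \<le> fst z ^ 2 + snd z ^ 2 \<and> fst z ^ 2 + snd z ^ 2 \<le> U}"

lemma closed_annulus: "closed (annulus L U)"
  unfolding annulus_def by (intro closed_Collect_conj closed_Collect_le continuous_intros)

lemma annulus_borel [measurable]: "annulus L U \<in> sets borel"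
  using closed_annulus by (rule borel_closed)

definition sl2_image :: "real \<Rightarrow> real \<Rightarrow> real \<Rightarrow> real^2 \<Rightarrow> real \<times> real" where
  "sl2_image a b c v = (a * v$1 + b * v$2, c * v$1 + (1 + b * c) / a * v$2)"

lemma sl2_image_sl2_of: "sl2_image a b c v = ((sl2_of a b c *v v) $ 1, (sl2_of a b c *v v) $ 2)"
  by (simp add: sl2_image_def sl2_of_def matrix_vector_mult_vec2_nth)

definition annulus_pair_density ::
    "real^2 \<Rightarrow> real^2 \<Rightarrow> real \<Rightarrow> real \<Rightarrow> real \<Rightarrow> real \<Rightarrow> real \<Rightarrow> ennreal" where
  "annulus_pair_density v u L U a b c =
     (if a \<noteq> 0 \<and> sl2_image a b c v \<in> annulus L U \<and> sl2_image a b c u \<in> annulus L U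
      then ennreal (1 / \<bar>a\<bar>) else 0)"

lemma annulus_pair_density_measurable [measurable]:
  "(\<lambda>x. annulus_pair_density v u L U (f x) (g x) (h x)) \<in> borel_measurable M"
  if "f \<in> borel_measurable M" "g \<in> borel_measurable M" "h \<in> borel_measurable M"
  using that unfolding annulus_pair_density_def sl2_image_def by measurable

lemma haar_SL2_E_set_le:
  "haar_SL2 (E_set v u \<tau>) \<le> (\<integral>\<^sup>+x. annulus_pair_density v u (exp (-\<tau>) ^ 2) (exp \<tau> ^ 2)
     (fst x) (fst (snd x)) (snd (snd x)) \<partial>lborel)"
  unfolding haar_SL2_def
proof (rule nn_integral_mono)
  fix x :: "real \<times> real \<times> real"
  obtain a b c where x: "x = (a, b, c)" by (cases x) auto
  have "sl2_image a b c w \<in> annulus (exp (-\<tau>) ^ 2) (exp \<tau> ^ 2)"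
    if "exp (-\<tau>) \<le> norm (sl2_of a b c *v w)" "norm (sl2_of a b c *v w) \<le> exp \<tau>" for w
    using that by (auto simp: annulus_def sl2_image_sl2_of norm_vec2_squared[symmetric] intro!: power_mono)
  then show "(case x of (a, b, c) \<Rightarrow> if a \<noteq> 0 \<and> sl2_of a b c \<in> E_set v u \<tau> then ennreal (1 / \<bar>a\<bar>) else 0)
      \<le> annulus_pair_density v u (exp (-\<tau>) ^ 2) (exp \<tau> ^ 2) (fst x) (fst (snd x)) (snd (snd x))"
    by (auto simp: x annulus_pair_density_def E_set_def)
qed

lemma emeasure_square_band_le:
  fixes A B :: real
  assumes "A \<le> B"
  shows "emeasure lborel {z::real. A \<le> z^2 \<and> z^2 \<le> B} \<le> ennreal (2 * sqrt (B - A))"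
proof (cases "B < 0")
  case True
  have "\<not> z^2 \<le> B" for z :: real using True zero_le_power2[of z] by linarith
  then have empty: "{z::real. A \<le> z^2 \<and> z^2 \<le> B} = {}" by auto
  show ?thesis unfolding empty by simp
next
  case False
  define s t where "s = sqrt (max A 0)" and "t = sqrt B"
  have st: "s \<le> t" using assms False by (auto simp: s_def t_def)
  have "{z::real. A \<le> z^2 \<and> z^2 \<le> B} \<subseteq> {-t..-s} \<union> {s..t}"
  proof
    fix z :: real assume "z \<in> {z. A \<le> z^2 \<and> z^2 \<le> B}"
    then have "max A 0 \<le> z^2" and "z^2 \<le> B" by auto
    from this[THEN real_sqrt_le_mono] have "s \<le> \<bar>z\<bar>" "\<bar>z\<bar> \<le> t"
      by (simp_all add: s_def t_def)
    then show "z \<in> {-t..-s} \<union> {s..t}" by (cases "z \<ge> 0") auto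
  qed
  then have "emeasure lborel {z::real. A \<le> z^2 \<and> z^2 \<le> B} \<le> emeasure lborel ({-t..-s} \<union> {s..t})"
    by (rule emeasure_mono) simp
  also have "\<dots> \<le> emeasure lborel {-t..-s} + emeasure lborel {s..t}"
    by (rule emeasure_subadditive) auto
  also have "\<dots> = ennreal (2 * (t - s))" using st by (simp add: ennreal_plus[symmetric])
  also have "t - s \<le> sqrt (B - A)"
    using sqrt_add_le_add_sqrt[of "max A 0" "B - max A 0"] assms False
    by (auto simp: s_def t_def max_def)
  finally show ?thesis by (simp add: ennreal_leI)
qed

lemma nn_integral_square_band_affine_le:
  fixes \<alpha> \<beta> A B :: real
  assumes "\<alpha> \<noteq> 0" "A \<le> B"
  shows "(\<integral>\<^sup>+a. indicator {z. A \<le> z^2 \<and> z^2 \<le> B} (\<beta> + \<alpha> * a) \<partial>lborel)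
    \<le> ennreal (2 * sqrt (B - A) / \<bar>\<alpha>\<bar>)"
proof -
  let ?S = "{z::real. A \<le> z^2 \<and> z^2 \<le> B}"
  let ?I = "\<integral>\<^sup>+a. indicator ?S (\<beta> + \<alpha> * a) \<partial>lborel"
  have "ennreal \<bar>\<alpha>\<bar> * ?I = emeasure lborel ?S"
    by (subst nn_integral_real_affine[OF _ assms(1), symmetric]) simp_all
  also have "\<dots> \<le> ennreal (2 * sqrt (B - A))" by (rule emeasure_square_band_le[OF assms(2)])
  finally have "ennreal (1 / \<bar>\<alpha>\<bar>) * (ennreal \<bar>\<alpha>\<bar> * ?I) \<le> ennreal (1 / \<bar>\<alpha>\<bar>) * ennreal (2 * sqrt (B - A))"
    by (rule mult_left_mono) simp
  then show ?thesis
    using assms by (simp add: mult.assoc[symmetric] ennreal_mult[symmetric])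
qed

lemma emeasure_annulus_le:
  assumes "0 \<le> L" "L \<le> U"
  shows "emeasure lborel (annulus L U) \<le> ennreal (pi * (U - L))"
proof -
  have "annulus L U \<subseteq> cball 0 (sqrt U) - ball 0 (sqrt L)"
  proof
    fix z :: "real \<times> real" assume "z \<in> annulus L U"
    then have "sqrt L \<le> norm z" "norm z \<le> sqrt U"
      by (cases z, auto simp: annulus_def norm_Pair intro!: real_sqrt_le_mono)+
    then show "z \<in> cball 0 (sqrt U) - ball 0 (sqrt L)" by (simp add: dist_norm)
  qed
  then have "emeasure lborel (annulus L U) \<le> emeasure lborel (cball (0::real\<times>real) (sqrt U) - ball 0 (sqrt L))"
    by (rule emeasure_mono) simp
  also have "\<dots> = emeasure lborel (cball (0::real\<times>real) (sqrt U)) - emeasure lborel (ball (0::real\<times>real) (sqrt L))"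
  proof (rule emeasure_Diff)
    show "emeasure lborel (ball (0::real\<times>real) (sqrt L)) \<noteq> \<infinity>"
      using emeasure_lborel_ball_finite[of "0::real\<times>real" "sqrt L"] by simp
    show "ball (0::real\<times>real) (sqrt L) \<subseteq> cball 0 (sqrt U)"
      by (rule order.trans[OF ball_subset_cball subset_cball]) (use assms in simp)
  qed auto
  also have "\<dots> = ennreal (pi * U) - ennreal (pi * L)"
    using assms unit_ball_vol_even[of 1] by (simp add: emeasure_cball emeasure_ball)
  also have "\<dots> = ennreal (pi * (U - L))" using assms by (simp add: ennreal_minus algebra_simps)
  finally show ?thesis .
qed

lemma nn_integral_lborel_pair:
  fixes f :: "'a::euclidean_space \<times> 'b::euclidean_space \<Rightarrow> ennreal"
  assumes "f \<in> borel_measurable borel"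
  shows "(\<integral>\<^sup>+z. f z \<partial>lborel) = (\<integral>\<^sup>+x. \<integral>\<^sup>+y. f (x, y) \<partial>lborel \<partial>lborel)"
  using lborel.nn_integral_fst[of f lborel] assms by (simp add: lborel_prod)

lemma nn_integral_lborel_triple:
  fixes f :: "real \<times> real \<times> real \<Rightarrow> ennreal"
  assumes [measurable]: "f \<in> borel_measurable borel"
  shows "(\<integral>\<^sup>+z. f z \<partial>lborel) = (\<integral>\<^sup>+a. \<integral>\<^sup>+b. \<integral>\<^sup>+c. f (a, b, c) \<partial>lborel \<partial>lborel \<partial>lborel)"
  by (simp add: nn_integral_lborel_pair[of f] nn_integral_lborel_pair[of "\<lambda>y. f (_, y)"])

lemma nn_integral_lborel_rotate:
  fixes f :: "real \<times> real \<times> real \<Rightarrow> ennreal"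
  assumes [measurable]: "f \<in> borel_measurable borel"
  shows "(\<integral>\<^sup>+a. \<integral>\<^sup>+x. \<integral>\<^sup>+y. f (a, x, y) \<partial>lborel \<partial>lborel \<partial>lborel)
       = (\<integral>\<^sup>+x. \<integral>\<^sup>+y. \<integral>\<^sup>+a. f (a, x, y) \<partial>lborel \<partial>lborel \<partial>lborel)"
proof -
  have pair: "pair_sigma_finite (lborel :: real measure) (lborel :: (real \<times> real) measure)"
    by (simp add: pair_sigma_finite_def lborel.sigma_finite_measure_axioms)
  have "(\<integral>\<^sup>+a. \<integral>\<^sup>+x. \<integral>\<^sup>+y. f (a, x, y) \<partial>lborel \<partial>lborel \<partial>lborel)
      = (\<integral>\<^sup>+a. \<integral>\<^sup>+xy. f (a, xy) \<partial>lborel \<partial>lborel)"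
    by (simp add: nn_integral_lborel_pair[of "\<lambda>xy. f (_, xy)"])
  also have "\<dots> = (\<integral>\<^sup>+xy. \<integral>\<^sup>+a. f (a, xy) \<partial>lborel \<partial>lborel)"
    by (rule pair_sigma_finite.Fubini[OF pair, symmetric]) (simp add: lborel_prod)
  also have "\<dots> = (\<integral>\<^sup>+x. \<integral>\<^sup>+y. \<integral>\<^sup>+a. f (a, x, y) \<partial>lborel \<partial>lborel \<partial>lborel)"
    by (simp add: nn_integral_lborel_pair[of "\<lambda>xy. \<integral>\<^sup>+a. f (a, xy) \<partial>lborel"])
  finally show ?thesis .
qed

lemma nn_integral_lborel_affine:
  fixes f :: "real \<Rightarrow> ennreal"
  assumes "f \<in> borel_measurable borel" "s \<noteq> 0"
  shows "(\<integral>\<^sup>+x. f x \<partial>lborel) = (\<integral>\<^sup>+y. ennreal \<bar>1/s\<bar> * f ((y - t) / s) \<partial>lborel)"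
proof -
  have "(\<integral>\<^sup>+x. f x \<partial>lborel) = ennreal \<bar>1/s\<bar> * (\<integral>\<^sup>+y. f (- t/s + 1/s * y) \<partial>lborel)"
    by (rule nn_integral_real_affine) (use assms in auto)
  also have "\<dots> = (\<integral>\<^sup>+y. ennreal \<bar>1/s\<bar> * f ((y - t) / s) \<partial>lborel)"
    using assms by (subst nn_integral_cmult[symmetric]) (simp_all add: diff_divide_distrib)
  finally show ?thesis .
qed

text \<open>For fixed a, the substitution (b, c) \<mapsto> (x1, x2) = sl2_image a b c (p, q), inverted as
  b = (x1 - a p) / q and c = (a x2 - q) / x1.\<close>
lemma nn_integral_sl2_coordinates:
  fixes F :: "real \<Rightarrow> real \<Rightarrow> ennreal"
  assumes F: "(\<lambda>(b, c). F b c) \<in> borel_measurable borel" and q: "q \<noteq> 0" and a: "a \<noteq> 0"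
  shows "(\<integral>\<^sup>+b. \<integral>\<^sup>+c. F b c \<partial>lborel \<partial>lborel)
    = (\<integral>\<^sup>+x1. \<integral>\<^sup>+x2. ennreal \<bar>a / (q * x1)\<bar> * F ((x1 - a*p) / q) ((a*x2 - q) / x1) \<partial>lborel \<partial>lborel)"
proof -
  have F_comp: "(\<lambda>x. F (f x) (g x)) \<in> borel_measurable borel"
    if "continuous_on UNIV f" "continuous_on UNIV g" for f g :: "real \<Rightarrow> real"
    using measurable_compose[OF borel_measurable_continuous_onI[of "\<lambda>x. (f x, g x)"] F] that
    by (simp add: continuous_on_Pair)
  have inner: "(\<integral>\<^sup>+c. F b c \<partial>lborel) = (\<integral>\<^sup>+x2. ennreal \<bar>a / x1\<bar> * F b ((a*x2 - q) / x1) \<partial>lborel)"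
    if "x1 \<noteq> 0" for b x1
  proof -
    have "(y - q/a) / (x1/a) = (a*y - q) / x1" for y using a that by (simp add: field_simps)
    then show ?thesis
      using nn_integral_lborel_affine[of "F b" "x1/a" "q/a"] F_comp[of "\<lambda>_. b" id] that a by simp
  qed
  have "(\<lambda>b. \<integral>\<^sup>+c. F b c \<partial>lborel) \<in> borel_measurable borel"
    using lborel.borel_measurable_nn_integral_fst[of "\<lambda>(b, c). F b c" lborel] F
    by (simp add: lborel_prod)
  then have "(\<integral>\<^sup>+b. \<integral>\<^sup>+c. F b c \<partial>lborel \<partial>lborel)
      = (\<integral>\<^sup>+x1. ennreal \<bar>1/q\<bar> * (\<integral>\<^sup>+c. F ((x1 - a*p) / q) c \<partial>lborel) \<partial>lborel)"
    by (rule nn_integral_lborel_affine) (use q in auto)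
  also have "\<dots> = (\<integral>\<^sup>+x1. \<integral>\<^sup>+x2. ennreal \<bar>a / (q * x1)\<bar> * F ((x1 - a*p) / q) ((a*x2 - q) / x1) \<partial>lborel \<partial>lborel)"
  proof (rule nn_integral_cong_AE)
    show "AE x1 in lborel. ennreal \<bar>1/q\<bar> * (\<integral>\<^sup>+c. F ((x1 - a*p) / q) c \<partial>lborel)
        = (\<integral>\<^sup>+x2. ennreal \<bar>a / (q * x1)\<bar> * F ((x1 - a*p) / q) ((a*x2 - q) / x1) \<partial>lborel)"
      using AE_lborel_singleton[of 0]
    proof eventually_elim
      case (elim x1)
      have "(\<lambda>x2. ennreal \<bar>a / x1\<bar> * F ((x1 - a*p) / q) ((a*x2 - q) / x1)) \<in> borel_measurable borel"
        using elim by (intro borel_measurable_times_ennreal borel_measurable_const F_comp continuous_intros) auto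
      then show ?case
        using elim by (simp add: inner nn_integral_cmult[symmetric] mult.assoc[symmetric]
            ennreal_mult[symmetric] abs_mult)
    qed
  qed
  finally show ?thesis .
qed

lemma sl2_image_solved:
  assumes "a \<noteq> 0" "v$2 \<noteq> 0" "x1 \<noteq> 0"
  shows "sl2_image a ((x1 - a * v$1) / v$2) ((a * x2 - v$2) / x1) v = (x1, x2)"
  using assms by (simp add: sl2_image_def field_simps)

lemma sl2_image_cross2:
  assumes "a \<noteq> 0"
  shows "fst (sl2_image a b c v) * snd (sl2_image a b c u) - snd (sl2_image a b c v) * fst (sl2_image a b c u)
    = cross2 v u"
  using assms by (simp add: sl2_image_def cross2_def field_simps)

lemma sl2_image_solved_inner:
  fixes v u :: "real^2" and a x1 x2 :: real
  assumes "a \<noteq> 0" "v$2 \<noteq> 0" "x1 \<noteq> 0"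
  defines "Y \<equiv> sl2_image a ((x1 - a * v$1) / v$2) ((a * x2 - v$2) / x1) u"
  shows "x1 * fst Y + x2 * snd Y
    = (x1^2 + x2^2) * u$2 / v$2 + x2 * cross2 v u / x1 - (x1^2 + x2^2) * cross2 v u / (v$2 * x1) * a"
  using assms by (simp add: sl2_image_def cross2_def field_simps power2_eq_square)

text \<open>annulus_pair_density in the coordinates (a, x1, x2), where (x1, x2) is the image of v,
  including the Jacobian of nn_integral_sl2_coordinates. At x1 = 0 the factor vanishes by the
  convention x / 0 = 0 (a null set).\<close>
definition annulus_pair_density_image ::
    "real^2 \<Rightarrow> real^2 \<Rightarrow> real \<Rightarrow> real \<Rightarrow> real \<Rightarrow> real \<Rightarrow> real \<Rightarrow> ennreal" where
  "annulus_pair_density_image v u L U a x1 x2 = ennreal \<bar>a / (v$2 * x1)\<bar> *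
     annulus_pair_density v u L U a ((x1 - a * v$1) / v$2) ((a * x2 - v$2) / x1)"

lemma annulus_pair_density_image_le:
  fixes v u :: "real^2" and a x1 x2 L U :: real
  assumes q: "v$2 \<noteq> 0" and x1: "x1 \<noteq> 0"
  defines "R \<equiv> x1^2 + x2^2"
  defines "S \<equiv> {z. R * L - cross2 v u ^ 2 \<le> z^2 \<and> z^2 \<le> R * U - cross2 v u ^ 2}"
  defines "\<alpha> \<equiv> - (R * cross2 v u / (v$2 * x1))" and "\<beta> \<equiv> R * u$2 / v$2 + x2 * cross2 v u / x1"
  shows "annulus_pair_density_image v u L U a x1 x2
    \<le> ennreal (1 / \<bar>v$2 * x1\<bar>) * indicator (annulus L U) (x1, x2) * indicator S (\<beta> + \<alpha> * a)"
proof (cases "a \<noteq> 0 \<and> annulus_pair_density v u L U a ((x1 - a * v$1) / v$2) ((a * x2 - v$2) / x1) \<noteq> 0")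
  case False
  then show ?thesis by (auto simp: annulus_pair_density_image_def annulus_pair_density_def)
next
  case True
  define Y where "Y = sl2_image a ((x1 - a * v$1) / v$2) ((a * x2 - v$2) / x1) u"
  have a: "a \<noteq> 0" and X: "(x1, x2) \<in> annulus L U" and Y: "Y \<in> annulus L U"
    using True sl2_image_solved[of a v x1 x2] q x1
    by (auto simp: annulus_pair_density_def Y_def split: if_splits)
  \<comment> \<open>Lagrange's identity turns the condition on Y into one on the inner product of (x1, x2) and Y,
    which is affine in a.\<close>
  have "x1 * snd Y - x2 * fst Y = cross2 v u"
    using sl2_image_cross2[OF a, of "(x1 - a * v$1) / v$2" "(a * x2 - v$2) / x1" v u]
    by (simp add: sl2_image_solved[OF a q x1] Y_def)
  moreover have "x1 * fst Y + x2 * snd Y = \<beta> + \<alpha> * a"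
    using sl2_image_solved_inner[OF a q x1, of x2 u] by (simp add: Y_def R_def \<alpha>_def \<beta>_def)
  ultimately have "R * (fst Y ^ 2 + snd Y ^ 2) = (\<beta> + \<alpha> * a) ^ 2 + cross2 v u ^ 2"
    using two_squares_mult[of x1 x2 "fst Y" "snd Y"] by (simp add: R_def)
  moreover have "R * L \<le> R * (fst Y ^ 2 + snd Y ^ 2)" "R * (fst Y ^ 2 + snd Y ^ 2) \<le> R * U"
    using Y by (simp_all add: annulus_def R_def mult_left_mono)
  ultimately have "\<beta> + \<alpha> * a \<in> S" by (simp add: S_def)
  then show ?thesis
    using a X q x1 True
    by (auto simp: annulus_pair_density_image_def annulus_pair_density_def ennreal_mult[symmetric]
        abs_mult split: if_splits)
qed

lemma nn_integral_annulus_pair_density_image_le: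
  fixes v u :: "real^2" and x1 x2 L U :: real
  assumes q: "v$2 \<noteq> 0" and D: "cross2 v u \<noteq> 0" and x1: "x1 \<noteq> 0" and L: "0 < L" "L \<le> U"
  shows "(\<integral>\<^sup>+a. annulus_pair_density_image v u L U a x1 x2 \<partial>lborel)
    \<le> ennreal (2 * sqrt (U - L) / (sqrt L * \<bar>cross2 v u\<bar>)) * indicator (annulus L U) (x1, x2)"
proof (cases "(x1, x2) \<in> annulus L U")
  case False
  have "annulus_pair_density_image v u L U a x1 x2 = 0" for a
    using annulus_pair_density_image_le[OF q x1, of u L U a x2] False by simp
  then show ?thesis by simp
next
  case True
  define R where "R = x1^2 + x2^2"
  define S where "S = {z::real. R * L - cross2 v u ^ 2 \<le> z^2 \<and> z^2 \<le> R * U - cross2 v u ^ 2}"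
  define \<alpha> where "\<alpha> = - (R * cross2 v u / (v$2 * x1))"
  define \<beta> where "\<beta> = R * u$2 / v$2 + x2 * cross2 v u / x1"
  have R: "0 < R" using x1 by (simp add: R_def add_pos_nonneg)
  have LR: "L \<le> R" using True by (simp add: annulus_def R_def)
  have \<alpha>: "\<alpha> \<noteq> 0" using R D q x1 by (simp add: \<alpha>_def)
  have "(\<integral>\<^sup>+a. annulus_pair_density_image v u L U a x1 x2 \<partial>lborel)
      \<le> (\<integral>\<^sup>+a. ennreal (1 / \<bar>v$2 * x1\<bar>) * indicator S (\<beta> + \<alpha> * a) \<partial>lborel)"
    using annulus_pair_density_image_le[OF q x1, of u L U _ x2] True
    by (intro nn_integral_mono) (simp add: R_def S_def \<alpha>_def \<beta>_def)
  also have "\<dots> = ennreal (1 / \<bar>v$2 * x1\<bar>) * (\<integral>\<^sup>+a. indicator S (\<beta> + \<alpha> * a) \<partial>lborel)"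
    by (rule nn_integral_cmult) (simp add: S_def)
  also have "\<dots> \<le> ennreal (1 / \<bar>v$2 * x1\<bar>) *
      ennreal (2 * sqrt ((R * U - cross2 v u ^ 2) - (R * L - cross2 v u ^ 2)) / \<bar>\<alpha>\<bar>)"
    unfolding S_def using \<alpha> R L by (intro mult_left_mono nn_integral_square_band_affine_le) auto
  also have "\<dots> = ennreal (2 * sqrt (U - L) / (sqrt R * \<bar>cross2 v u\<bar>))"
  proof -
    have "sqrt ((R * U - cross2 v u ^ 2) - (R * L - cross2 v u ^ 2)) = sqrt R * sqrt (U - L)"
      by (simp add: real_sqrt_mult[symmetric] algebra_simps)
    moreover have "R = sqrt R * sqrt R" using R by simp
    ultimately have "1 / \<bar>v$2 * x1\<bar> * (2 * sqrt ((R * U - cross2 v u ^ 2) - (R * L - cross2 v u ^ 2)) / \<bar>\<alpha>\<bar>)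
        = 2 * sqrt (U - L) / (sqrt R * \<bar>cross2 v u\<bar>)"
      using R q x1 D by (simp add: \<alpha>_def abs_mult field_simps)
    then show ?thesis using R L by (subst ennreal_mult[symmetric]) simp_all
  qed
  also have "\<dots> \<le> ennreal (2 * sqrt (U - L) / (sqrt L * \<bar>cross2 v u\<bar>))"
    using LR L D by (intro ennreal_leI divide_left_mono mult_right_mono) auto
  finally show ?thesis using True by simp
qed

lemma nn_integral_annulus_pair_density_le:
  fixes v u :: "real^2" and L U :: real
  assumes q: "v$2 \<noteq> 0" and D: "cross2 v u \<noteq> 0" and L: "0 < L" "L \<le> U"
  shows "(\<integral>\<^sup>+x. annulus_pair_density v u L U (fst x) (fst (snd x)) (snd (snd x)) \<partial>lborel)
    \<le> ennreal (2 * sqrt (U - L) / (sqrt L * \<bar>cross2 v u\<bar>) * (pi * (U - L)))"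
proof -
  define K where "K = 2 * sqrt (U - L) / (sqrt L * \<bar>cross2 v u\<bar>)"
  let ?G = "annulus_pair_density_image v u L U"
  have "(\<lambda>x. annulus_pair_density v u L U (fst x) (fst (snd x)) (snd (snd x))) \<in> borel_measurable borel"
    unfolding borel_prod[symmetric] by measurable
  then have "(\<integral>\<^sup>+x. annulus_pair_density v u L U (fst x) (fst (snd x)) (snd (snd x)) \<partial>lborel)
      = (\<integral>\<^sup>+a. \<integral>\<^sup>+b. \<integral>\<^sup>+c. annulus_pair_density v u L U a b c \<partial>lborel \<partial>lborel \<partial>lborel)"
    by (simp add: nn_integral_lborel_triple)
  also have "\<dots> = (\<integral>\<^sup>+a. \<integral>\<^sup>+x1. \<integral>\<^sup>+x2. ?G a x1 x2 \<partial>lborel \<partial>lborel \<partial>lborel)"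
  proof (rule nn_integral_cong)
    fix a :: real
    show "(\<integral>\<^sup>+b. \<integral>\<^sup>+c. annulus_pair_density v u L U a b c \<partial>lborel \<partial>lborel)
        = (\<integral>\<^sup>+x1. \<integral>\<^sup>+x2. ?G a x1 x2 \<partial>lborel \<partial>lborel)"
    proof (cases "a = 0")
      case True
      then show ?thesis by (simp add: annulus_pair_density_image_def annulus_pair_density_def)
    next
      case False
      have "(\<lambda>(b, c). annulus_pair_density v u L U a b c) \<in> borel_measurable borel"
        unfolding borel_prod[symmetric] split_beta' by measurable
      from nn_integral_sl2_coordinates[OF this q False]
      show ?thesis unfolding annulus_pair_density_image_def .
    qed
  qed
  also have "\<dots> = (\<integral>\<^sup>+x1. \<integral>\<^sup>+x2. \<integral>\<^sup>+a. ?G a x1 x2 \<partial>lborel \<partial>lborel \<partial>lborel)"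
  proof -
    have "(\<lambda>(a, x1, x2). ?G a x1 x2) \<in> borel_measurable borel"
      unfolding borel_prod[symmetric] split_beta' annulus_pair_density_image_def by measurable
    from nn_integral_lborel_rotate[OF this] show ?thesis by simp
  qed
  also have "\<dots> \<le> (\<integral>\<^sup>+x1. \<integral>\<^sup>+x2. ennreal K * indicator (annulus L U) (x1, x2) \<partial>lborel \<partial>lborel)"
  proof (intro nn_integral_mono)
    fix x1 x2 :: real
    show "(\<integral>\<^sup>+a. ?G a x1 x2 \<partial>lborel) \<le> ennreal K * indicator (annulus L U) (x1, x2)"
    proof (cases "x1 = 0")
      case True
      then show ?thesis by (simp add: annulus_pair_density_image_def)
    next
      case False
      then show ?thesis unfolding K_def by (rule nn_integral_annulus_pair_density_image_le[OF q D _ L])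
    qed
  qed
  also have "\<dots> = (\<integral>\<^sup>+z. ennreal K * indicator (annulus L U) z \<partial>lborel)"
    by (rule nn_integral_lborel_pair[symmetric]) measurable
  also have "\<dots> = ennreal K * emeasure lborel (annulus L U)"
    by (rule nn_integral_cmult_indicator) simp
  also have "\<dots> \<le> ennreal K * ennreal (pi * (U - L))"
    using L by (intro mult_left_mono emeasure_annulus_le) auto
  also have "\<dots> = ennreal (K * (pi * (U - L)))"
    using L by (simp add: K_def ennreal_mult[symmetric])
  finally show ?thesis unfolding K_def .
qed

lemma powr_three_halves: "0 \<le> t \<Longrightarrow> t powr (3/2) = t * sqrt t"
  using powr_add[of t 1 "1/2"] by (cases "t = 0") (simp_all add: powr_half_sqrt)

lemma haar_SL2_E_set_le_of_cross2:
  fixes v u :: "real^2" and c \<tau> :: real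
  assumes q: "v$2 \<noteq> 0" and D: "c^2/32 \<le> \<bar>cross2 v u\<bar>" and \<tau>: "0 < \<tau>" "\<tau> \<le> 1/2" and c: "0 < c"
  shows "haar_SL2 (E_set v u \<tau>) \<le> ennreal (3072 * pi / c^2 * \<tau> powr (3/2))"
proof -
  define L U where "L = exp (-\<tau>) ^ 2" and "U = exp \<tau> ^ 2"
  define K where "K = 2 * sqrt (U - L) / (sqrt L * \<bar>cross2 v u\<bar>)"
  have L: "0 < L" "L \<le> U" using \<tau> by (simp_all add: L_def U_def power_mono)
  have gap: "U - L \<le> 8 * \<tau>" using exp_sq_diff_le \<tau> by (simp add: L_def U_def)
  have "sqrt (U - L) \<le> sqrt 8 * sqrt \<tau>" using gap by (simp add: real_sqrt_mult[symmetric])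
  also have "\<dots> \<le> 3 * sqrt \<tau>" using \<tau> by (intro mult_right_mono) (simp_all add: real_le_lsqrt)
  finally have sqrt_gap: "sqrt (U - L) \<le> 3 * sqrt \<tau>" .
  have "1/2 \<le> sqrt L" using exp_ge_add_one_self[of "-\<tau>"] \<tau> by (simp add: L_def)
  then have "(1/2) * (c^2/32) \<le> sqrt L * \<bar>cross2 v u\<bar>" using D L by (intro mult_mono) auto
  then have "K \<le> 2 * (3 * sqrt \<tau>) / (c^2/64)"
    unfolding K_def using sqrt_gap c \<tau> by (intro frac_le) auto
  then have "K * (pi * (U - L)) \<le> 2 * (3 * sqrt \<tau>) / (c^2/64) * (pi * (8 * \<tau>))"
    using gap L by (intro mult_mono) (auto simp: K_def)
  also have "\<dots> = 3072 * pi / c^2 * \<tau> powr (3/2)" using \<tau> by (simp add: powr_three_halves)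
  finally have bound: "K * (pi * (U - L)) \<le> 3072 * pi / c^2 * \<tau> powr (3/2)" .
  have "cross2 v u \<noteq> 0" using D c by auto
  then have "haar_SL2 (E_set v u \<tau>) \<le> ennreal (K * (pi * (U - L)))"
    using haar_SL2_E_set_le[of v u \<tau>] nn_integral_annulus_pair_density_le[OF q _ L] order_trans
    unfolding K_def L_def U_def by blast
  also have "\<dots> \<le> ennreal (3072 * pi / c^2 * \<tau> powr (3/2))" using bound by (rule ennreal_leI)
  finally show ?thesis .
qed

lemma E_set_commute: "E_set v u \<tau> = E_set u v \<tau>"
  unfolding E_set_def by auto

lemma abs_cross2_commute: "\<bar>cross2 u v\<bar> = \<bar>cross2 v u\<bar>"
  by (simp add: cross2_def abs_minus_commute mult.commute)

lemma haar_SL2_empty: "haar_SL2 {} = 0"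
  by (simp add: haar_SL2_def case_prod_unfold)

theorem proposition3p3:
  fixes c :: real
  assumes "c > 0"
  shows "\<exists>C \<tau>0. C > 0 \<and> \<tau>0 > 0 \<and>
    (\<forall>\<tau> (v::real^2) v'. 0 < \<tau> \<and> \<tau> < \<tau>0 \<and> norm (v - v') \<ge> c \<and> norm (v + v') \<ge> c \<longrightarrow>
       haar_SL2 (E_set v v' \<tau>) \<le> ennreal (C * \<tau> powr (3/2)))"
proof (intro exI conjI allI impI)
  show "3072 * pi / c^2 > 0" and "min (1/2) (c^2/128) > 0" using assms by simp_all
  fix \<tau> :: real and v v' :: "real^2"
  assume h: "0 < \<tau> \<and> \<tau> < min (1/2) (c^2/128) \<and> c \<le> norm (v - v') \<and> c \<le> norm (v + v')"
  show "haar_SL2 (E_set v v' \<tau>) \<le> ennreal (3072 * pi / c^2 * \<tau> powr (3/2))"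
  proof (cases "E_set v v' \<tau> = {}")
    case True
    then show ?thesis by (simp add: haar_SL2_empty)
  next
    case False
    then obtain \<gamma> where "\<gamma> \<in> E_set v v' \<tau>" by blast
    then have D: "c^2/32 \<le> \<bar>cross2 v v'\<bar>"
      using h assms by (intro cross2_lower_bound) auto
    then consider "v$2 \<noteq> 0" | "v'$2 \<noteq> 0" using assms by (force simp: cross2_def)
    then show ?thesis
    proof cases
      case 1
      then show ?thesis using D h assms by (intro haar_SL2_E_set_le_of_cross2) auto
    next
      case 2
      then show ?thesis using D h assms unfolding E_set_commute[of v] abs_cross2_commute[of v]
        by (intro haar_SL2_E_set_le_of_cross2) auto
    qed
  qed
qed

end
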